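(* Under the hypotheses and notation of the context (in particular with $\xi_k^c,\eta_k^c$, $k=1,2$, as defined there), the Geronimus perturbed monic orthogonal polynomials satisfy $$[Q_n^{c,N}]''(x)+\mathcal R(x;n)[Q_n^{c,N}]'(x)+\mathcal S(x;n)Q_n^{c,N}(x)=0,$$ where $$\mathcal R(x;n)=-\Big(\xi_1^c(x;n)+\eta_2^c(x;n)+\frac{[\eta_1^c(x;n)]'}{\eta_1^c(x;n)}\Big),$$ $$\mathcal S(x;n)=\xi_1^c(x;n)\eta_2^c(x;n)-\eta_1^c(x;n)\xi_2^c(x;n)+\frac{\xi_1^c(x;n)[\eta_1^c(x;n)]'-[\xi_1^c(x;n)]'\eta_1^c(x;n)}{\eta_1^c(x;n)}.$$
   Context: $\mu$ is a positive Borel measure on $\mathbb{R}$, absolutely continuous w.r.t. Lebesgue measure, with finite moments, supported on a set $E$ with infinitely many points; $c\in\mathbb{R}\setminus E$, $N>0$. $\mu$ is (semi-)classical: its monic orthogonal polynomials $P_n$ satisfy $xP_n=P_{n+1}+\beta_nP_n+\gamma_nP_{n-1}$ and $\sigma(x)P_n'=a(x;n)P_n+b(x;n)P_{n-1}$ with polynomials $\sigma,a,b$ of degrees independent of $n$. $\{Q_n^c\}$ is the MOPS for $\int fg\frac{1}{x-c}d\mu$; $\{Q_n^{c,N}\}$ is the MOPS for $\int fg\frac{1}{x-c}d\mu+Nf(c)g(c)$. $\Lambda_n^c=\frac{\pi_{n-1}-r_{n-1}}{1+NB_n^c}-\pi_{n-1}$ with $\pi_{n-1}=P_n(c)/P_{n-1}(c)$,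 $r_{n-1}=F_n(c)/F_{n-1}(c)$, $F_n(s)=\int\frac{P_n(x)}{x-s}d\mu(x)$, $F_{-1}=1$, $B_n^c=\frac{-Q_n^c(c)P_{n-1}(c)}{\int P_{n-1}^2d\mu}$. Define $B_2=\Lambda_{n-1}^c\big(\frac{1}{\Lambda_{n-1}^c}+\frac{x-\beta_{n-1}}{\gamma_{n-1}}\big)$, $\Delta=B_2+\frac{\Lambda_n^c\Lambda_{n-1}^c}{\gamma_{n-1}}$, $C_1=\frac{1}{\sigma}\big(a(x;n)-\Lambda_n^c\frac{b(x;n-1)}{\gamma_{n-1}}\big)$, $D_1=\frac1\sigma\big(b(x;n)+\Lambda_n^cb(x;n-1)\big(\frac{a(x;n-1)}{b(x;n-1)}+\frac{x-\beta_{n-1}}{\gamma_{n-1}}\big)\big)$, $C_2=\frac{-\Lambda_{n-1}^c}{\sigma}\big(\frac{a(x;n)}{\gamma_{n-1}}+\frac{b(x;n-1)}{\gamma_{n-1}}\big(\frac{1}{\Lambda_{n-1}^c}+\frac{x-\beta_{n-1}}{\gamma_{n-1}}\big)\big)$, $D_2=\frac{\Lambda_{n-1}^c}{\sigma}\big[\frac{\sigma-b(x;n)}{\gamma_{n-1}}+b(x;n-1)\big(\frac{a(x;n-1)}{b(x;n-1)}+\frac{x-\beta_{n-1}}{\gamma_{n-1}}\big)\big(\frac{1}{\Lambda_{n-1}^c}+\frac{x-\beta_{n-1}}{\gamma_{n-1}}\big)\big]$, and for $k=1,2$: $\xi_k^c=\frac{C_kB_2\gamma_{n-1}+D_k\Lambda_{n-1}^c}{\Delta\gamma_{n-1}}$,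 $\eta_k^c=\frac{D_k-C_k\Lambda_n^c}{\Delta}$ (all functions of $x$ and $n$). The statement concerns indices $n$ for which all quantities are defined. *)

theory Defs
  imports "HOL-Analysis.Analysis" "HOL-Computational_Algebra.Polynomial"
begin

definition msupport :: "real measure \<Rightarrow> real set" where
  "msupport \<mu> = {x. \<forall>e>0. emeasure \<mu> {x - e<..<x + e} > 0}"

definition MOPS :: "(real poly \<Rightarrow> real poly \<Rightarrow> real) \<Rightarrow> (nat \<Rightarrow> real poly) \<Rightarrow> bool" where
  "MOPS L P \<longleftrightarrow> (\<forall>n. degree (P n) = n \<and> lead_coeff (P n) = 1 \<and>
       (\<forall>m<n. L (P n) (P m) = 0) \<and> L (P n) (P n) \<noteq> 0)"

definition ip_mu :: "real measure \<Rightarrow> real poly \<Rightarrow> real poly \<Rightarrow> real" where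
  "ip_mu \<mu> f g = (\<integral>x. poly f x * poly g x \<partial>\<mu>)"

definition ip_geron :: "real measure \<Rightarrow> real \<Rightarrow> real poly \<Rightarrow> real poly \<Rightarrow> real" where
  "ip_geron \<mu> c f g = (\<integral>x. poly f x * poly g x / (x - c) \<partial>\<mu>)"

definition ip_geron_N :: "real measure \<Rightarrow> real \<Rightarrow> real \<Rightarrow> real poly \<Rightarrow> real poly \<Rightarrow> real" where
  "ip_geron_N \<mu> c N f g = ip_geron \<mu> c f g + N * poly f c * poly g c"

definition Fm :: "real measure \<Rightarrow> (nat \<Rightarrow> real poly) \<Rightarrow> nat \<Rightarrow> real \<Rightarrow> real" where
  "Fm \<mu> P n s = (\<integral>x. poly (P n) x / (x - s) \<partial>\<mu>)"

(* pi_{n-1} = P_n(c)/P_{n-1}(c) *)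
definition pic :: "(nat \<Rightarrow> real poly) \<Rightarrow> real \<Rightarrow> nat \<Rightarrow> real" where
  "pic P c n = poly (P n) c / poly (P (n - 1)) c"

(* r_{n-1} = F_n(c)/F_{n-1}(c) *)
definition rc :: "real measure \<Rightarrow> (nat \<Rightarrow> real poly) \<Rightarrow> real \<Rightarrow> nat \<Rightarrow> real" where
  "rc \<mu> P c n = Fm \<mu> P n c / Fm \<mu> P (n - 1) c"

definition Bc :: "real measure \<Rightarrow> (nat \<Rightarrow> real poly) \<Rightarrow> (nat \<Rightarrow> real poly) \<Rightarrow> real \<Rightarrow> nat \<Rightarrow> real" where
  "Bc \<mu> P Qc c n = - poly (Qc n) c * poly (P (n - 1)) c / (\<integral>x. (poly (P (n - 1)) x)^2 \<partial>\<mu>)"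

definition Lam :: "real measure \<Rightarrow> (nat \<Rightarrow> real poly) \<Rightarrow> (nat \<Rightarrow> real poly) \<Rightarrow> real \<Rightarrow> real \<Rightarrow> nat \<Rightarrow> real" where
  "Lam \<mu> P Qc c N n = (pic P c n - rc \<mu> P c n) / (1 + N * Bc \<mu> P Qc c n) - pic P c n"

(* The coefficient functions; parameters: sigma, a, b, beta, gamma,
   L1 = Lambda_n^c, L0 = Lambda_{n-1}^c, index n, variable x *)
definition B2f :: "(nat \<Rightarrow> real) \<Rightarrow> (nat \<Rightarrow> real) \<Rightarrow> real \<Rightarrow> nat \<Rightarrow> real \<Rightarrow> real" where
  "B2f \<beta> \<gamma> L0 n x = L0 * (1 / L0 + (x - \<beta> (n - 1)) / \<gamma> (n - 1))"

definition Deltaf :: "(nat \<Rightarrow> real) \<Rightarrow> (nat \<Rightarrow> real) \<Rightarrow> real \<Rightarrow> real \<Rightarrow> nat \<Rightarrow> real \<Rightarrow> real" where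
  "Deltaf \<beta> \<gamma> L1 L0 n x = B2f \<beta> \<gamma> L0 n x + L1 * L0 / \<gamma> (n - 1)"

definition C1f :: "real poly \<Rightarrow> (nat \<Rightarrow> real poly) \<Rightarrow> (nat \<Rightarrow> real poly) \<Rightarrow> (nat \<Rightarrow> real) \<Rightarrow> real \<Rightarrow> nat \<Rightarrow> real \<Rightarrow> real" where
  "C1f \<sigma> a b \<gamma> L1 n x =
     (1 / poly \<sigma> x) * (poly (a n) x - L1 * poly (b (n - 1)) x / \<gamma> (n - 1))"

definition D1f :: "real poly \<Rightarrow> (nat \<Rightarrow> real poly) \<Rightarrow> (nat \<Rightarrow> real poly) \<Rightarrow> (nat \<Rightarrow> real) \<Rightarrow> (nat \<Rightarrow> real) \<Rightarrow> real \<Rightarrow> nat \<Rightarrow> real \<Rightarrow> real" where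
  "D1f \<sigma> a b \<beta> \<gamma> L1 n x =
     (1 / poly \<sigma> x) * (poly (b n) x + L1 * poly (b (n - 1)) x *
        (poly (a (n - 1)) x / poly (b (n - 1)) x + (x - \<beta> (n - 1)) / \<gamma> (n - 1)))"

definition C2f :: "real poly \<Rightarrow> (nat \<Rightarrow> real poly) \<Rightarrow> (nat \<Rightarrow> real poly) \<Rightarrow> (nat \<Rightarrow> real) \<Rightarrow> (nat \<Rightarrow> real) \<Rightarrow> real \<Rightarrow> nat \<Rightarrow> real \<Rightarrow> real" where
  "C2f \<sigma> a b \<beta> \<gamma> L0 n x =
     (- L0 / poly \<sigma> x) * (poly (a n) x / \<gamma> (n - 1) + poly (b (n - 1)) x / \<gamma> (n - 1) *
        (1 / L0 + (x - \<beta> (n - 1)) / \<gamma> (n - 1)))"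

definition D2f :: "real poly \<Rightarrow> (nat \<Rightarrow> real poly) \<Rightarrow> (nat \<Rightarrow> real poly) \<Rightarrow> (nat \<Rightarrow> real) \<Rightarrow> (nat \<Rightarrow> real) \<Rightarrow> real \<Rightarrow> nat \<Rightarrow> real \<Rightarrow> real" where
  "D2f \<sigma> a b \<beta> \<gamma> L0 n x =
     (L0 / poly \<sigma> x) * ((poly \<sigma> x - poly (b n) x) / \<gamma> (n - 1) + poly (b (n - 1)) x *
        (poly (a (n - 1)) x / poly (b (n - 1)) x + (x - \<beta> (n - 1)) / \<gamma> (n - 1)) *
        (1 / L0 + (x - \<beta> (n - 1)) / \<gamma> (n - 1)))"

definition xi1 :: "real poly \<Rightarrow> (nat \<Rightarrow> real poly) \<Rightarrow> (nat \<Rightarrow> real poly) \<Rightarrow> (nat \<Rightarrow> real) \<Rightarrow> (nat \<Rightarrow> real) \<Rightarrow> real \<Rightarrow> real \<Rightarrow> nat \<Rightarrow> real \<Rightarrow> real" where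
  "xi1 \<sigma> a b \<beta> \<gamma> L1 L0 n x =
     (C1f \<sigma> a b \<gamma> L1 n x * B2f \<beta> \<gamma> L0 n x * \<gamma> (n - 1) + D1f \<sigma> a b \<beta> \<gamma> L1 n x * L0)
     / (Deltaf \<beta> \<gamma> L1 L0 n x * \<gamma> (n - 1))"

definition eta1 :: "real poly \<Rightarrow> (nat \<Rightarrow> real poly) \<Rightarrow> (nat \<Rightarrow> real poly) \<Rightarrow> (nat \<Rightarrow> real) \<Rightarrow> (nat \<Rightarrow> real) \<Rightarrow> real \<Rightarrow> real \<Rightarrow> nat \<Rightarrow> real \<Rightarrow> real" where
  "eta1 \<sigma> a b \<beta> \<gamma> L1 L0 n x =
     (D1f \<sigma> a b \<beta> \<gamma> L1 n x - C1f \<sigma> a b \<gamma> L1 n x * L1) / Deltaf \<beta> \<gamma> L1 L0 n x"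

definition xi2 :: "real poly \<Rightarrow> (nat \<Rightarrow> real poly) \<Rightarrow> (nat \<Rightarrow> real poly) \<Rightarrow> (nat \<Rightarrow> real) \<Rightarrow> (nat \<Rightarrow> real) \<Rightarrow> real \<Rightarrow> real \<Rightarrow> nat \<Rightarrow> real \<Rightarrow> real" where
  "xi2 \<sigma> a b \<beta> \<gamma> L1 L0 n x =
     (C2f \<sigma> a b \<beta> \<gamma> L0 n x * B2f \<beta> \<gamma> L0 n x * \<gamma> (n - 1) + D2f \<sigma> a b \<beta> \<gamma> L0 n x * L0)
     / (Deltaf \<beta> \<gamma> L1 L0 n x * \<gamma> (n - 1))"

definition eta2 :: "real poly \<Rightarrow> (nat \<Rightarrow> real poly) \<Rightarrow> (nat \<Rightarrow> real poly) \<Rightarrow> (nat \<Rightarrow> real) \<Rightarrow> (nat \<Rightarrow> real) \<Rightarrow> real \<Rightarrow> real \<Rightarrow> nat \<Rightarrow> real \<Rightarrow> real" where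
  "eta2 \<sigma> a b \<beta> \<gamma> L1 L0 n x =
     (D2f \<sigma> a b \<beta> \<gamma> L0 n x - C2f \<sigma> a b \<beta> \<gamma> L0 n x * L1) / Deltaf \<beta> \<gamma> L1 L0 n x"

definition Rf :: "real poly \<Rightarrow> (nat \<Rightarrow> real poly) \<Rightarrow> (nat \<Rightarrow> real poly) \<Rightarrow> (nat \<Rightarrow> real) \<Rightarrow> (nat \<Rightarrow> real) \<Rightarrow> real \<Rightarrow> real \<Rightarrow> nat \<Rightarrow> real \<Rightarrow> real" where
  "Rf \<sigma> a b \<beta> \<gamma> L1 L0 n x =
     - (xi1 \<sigma> a b \<beta> \<gamma> L1 L0 n x + eta2 \<sigma> a b \<beta> \<gamma> L1 L0 n x
        + deriv (eta1 \<sigma> a b \<beta> \<gamma> L1 L0 n) x / eta1 \<sigma> a b \<beta> \<gamma> L1 L0 n x)"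

definition Sf :: "real poly \<Rightarrow> (nat \<Rightarrow> real poly) \<Rightarrow> (nat \<Rightarrow> real poly) \<Rightarrow> (nat \<Rightarrow> real) \<Rightarrow> (nat \<Rightarrow> real) \<Rightarrow> real \<Rightarrow> real \<Rightarrow> nat \<Rightarrow> real \<Rightarrow> real" where
  "Sf \<sigma> a b \<beta> \<gamma> L1 L0 n x =
     xi1 \<sigma> a b \<beta> \<gamma> L1 L0 n x * eta2 \<sigma> a b \<beta> \<gamma> L1 L0 n x
     - eta1 \<sigma> a b \<beta> \<gamma> L1 L0 n x * xi2 \<sigma> a b \<beta> \<gamma> L1 L0 n x
     + (xi1 \<sigma> a b \<beta> \<gamma> L1 L0 n x * deriv (eta1 \<sigma> a b \<beta> \<gamma> L1 L0 n) x
        - deriv (xi1 \<sigma> a b \<beta> \<gamma> L1 L0 n) x * eta1 \<sigma> a b \<beta> \<gamma> L1 L0 n x)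
       / eta1 \<sigma> a b \<beta> \<gamma> L1 L0 n x"

end

theory Submission
  imports Defs
begin

text \<open>
  For any l, the polynomial P_n + l P_(n-1) is monic of degree n. Writing q = (x - c) s + q(c) for
  deg q < n, its perturbed inner product with q reduces to q(c) (F_n(c) + l F_(n-1)(c)
  + N (P_n(c) + l P_(n-1)(c))), so uniqueness of monic orthogonal polynomials gives
  Q_n^(c,N) = P_n + l P_(n-1) for the l annihilating that factor; the Wronskian-type identity
  F_(m+1)(c) P_m(c) - F_m(c) P_(m+1)(c) = <P_m, P_m> identifies l with \<Lambda>_n^c.
  The structure relation and the three-term recurrence then express the derivatives of
  Q_n^(c,N) and Q_(n-1)^(c,N) in terms of P_n, P_(n-1), hence (solving a 2x2 system) in terms of the
  pair itself; differentiating the first of these ladder relations once more and eliminating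
  Q_(n-1)^(c,N) gives the differential equation.
\<close>

locale poly_bilinear =
  fixes L :: "real poly \<Rightarrow> real poly \<Rightarrow> real"
  assumes add_left: "L (p + q) r = L p r + L q r"
    and smult_left: "L (smult a p) r = a * L p r"
    and commute: "L p q = L q p"
begin

lemma add_right: "L r (p + q) = L r p + L r q"
  using add_left commute by metis

lemma smult_right: "L r (smult a p) = a * L r p"
  using smult_left commute by metis

lemma zero_left: "L 0 r = 0"
  using smult_left[of 0 0 r] by simp

lemma diff_left: "L (p - q) r = L p r - L q r"
  using add_left[of "p - q" q r] by simp

lemma diff_right: "L r (p - q) = L r p - L r q"
  using diff_left commute by metis

end

lemma MOPS_degree: "MOPS L Q \<Longrightarrow> degree (Q n) = n"
  and MOPS_lead_coeff: "MOPS L Q \<Longrightarrow> lead_coeff (Q n) = 1"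
  and MOPS_norm_nonzero: "MOPS L Q \<Longrightarrow> L (Q n) (Q n) \<noteq> 0"
  unfolding MOPS_def by blast+

lemma MOPS_coeff_top: "MOPS L Q \<Longrightarrow> coeff (Q n) n = 1"
  using MOPS_degree MOPS_lead_coeff by metis

lemma MOPS_0: "MOPS L Q \<Longrightarrow> Q 0 = 1"
  using MOPS_degree[of L Q 0] MOPS_lead_coeff[of L Q 0]
  by (metis degree_0_id one_pCons)

lemma degree_diff_smult_monic_less:
  fixes q Q :: "'a::comm_ring_1 poly"
  assumes "degree q \<le> n" "degree Q = n" "lead_coeff Q = 1"
  shows "degree (q - smult (coeff q n) Q) < n \<or> q - smult (coeff q n) Q = 0"
proof -
  let ?d = "q - smult (coeff q n) Q"
  have "degree ?d \<le> n"
    using assms by (intro degree_diff_le order.trans[OF degree_smult_le]) auto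
  moreover have "coeff ?d n = 0" using assms by simp
  ultimately show ?thesis
    by (metis leading_coeff_0_iff le_neq_implies_less)
qed

context poly_bilinear
begin

lemma orthogonal_below_degree:
  assumes Q: "MOPS L Q" and orth: "\<And>m. m < n \<Longrightarrow> L X (Q m) = 0"
    and p: "degree p < n \<or> p = 0"
  shows "L X p = 0"
  using orth p
proof (induction n arbitrary: p)
  case 0
  then show ?case by (metis zero_left commute less_nat_zero_code)
next
  case (Suc n)
  let ?d = "p - smult (coeff p n) (Q n)"
  have "degree p \<le> n" using Suc.prems(2) by auto
  then have "degree ?d < n \<or> ?d = 0"
    by (intro degree_diff_smult_monic_less) (auto simp: MOPS_degree[OF Q] MOPS_coeff_top[OF Q])
  then have "L X ?d = 0" using Suc.IH Suc.prems(1) by simp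
  moreover have "L X (Q n) = 0" using Suc.prems(1) by simp
  moreover have "p = ?d + smult (coeff p n) (Q n)" by simp
  ultimately show ?case by (metis add_right smult_right mult_zero_right add_0)
qed

lemma MOPS_orthogonal_lower:
  assumes "MOPS L Q" "degree p < n \<or> p = 0"
  shows "L (Q n) p = 0"
  using orthogonal_below_degree[of Q n "Q n" p] assms unfolding MOPS_def by blast

lemma MOPS_unique:
  assumes Q: "MOPS L Q" and R: "degree R = n" "lead_coeff R = 1"
    and orth: "\<And>p. degree p < n \<or> p = 0 \<Longrightarrow> L R p = 0"
  shows "R = Q n"
proof (rule ccontr)
  let ?D = "Q n - R"
  let ?d = "degree ?D" and ?l = "lead_coeff ?D"
  assume "R \<noteq> Q n"
  then have "?D \<noteq> 0" by simp
  have "degree (R - smult (coeff R n) (Q n)) < n \<or> R - smult (coeff R n) (Q n) = 0"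
    using R by (intro degree_diff_smult_monic_less) (auto simp: MOPS_degree[OF Q] MOPS_coeff_top[OF Q])
  moreover have "R - smult (coeff R n) (Q n) = - ?D" using R by simp
  ultimately have "?d < n" using \<open>?D \<noteq> 0\<close> by (metis degree_minus neg_equal_0_iff_equal)
  have orth_D: "L ?D p = 0" if "degree p < n \<or> p = 0" for p
    using MOPS_orthogonal_lower[OF Q that] orth[OF that] by (simp add: diff_left)
  \<comment> \<open>Testing ?D against Q ?d isolates its leading coefficient.\<close>
  have "degree (?D - smult ?l (Q ?d)) < ?d \<or> ?D - smult ?l (Q ?d) = 0"
    by (intro degree_diff_smult_monic_less) (auto simp: MOPS_degree[OF Q] MOPS_coeff_top[OF Q])
  then have rest: "L (Q ?d) (?D - smult ?l (Q ?d)) = 0"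
    by (rule MOPS_orthogonal_lower[OF Q])
  have "0 = L (Q ?d) ?D"
    using orth_D[of "Q ?d"] \<open>?d < n\<close> commute by (simp add: MOPS_degree[OF Q])
  also have "\<dots> = L (Q ?d) (smult ?l (Q ?d) + (?D - smult ?l (Q ?d)))" by simp
  also have "\<dots> = ?l * L (Q ?d) (Q ?d)"
    using rest by (simp only: add_right smult_right)
  finally show False
    using leading_coeff_neq_0[OF \<open>?D \<noteq> 0\<close>] MOPS_norm_nonzero[OF Q] by (metis mult_eq_0_iff)
qed

end

definition cauchy_transform :: "real measure \<Rightarrow> real \<Rightarrow> real poly \<Rightarrow> real" where
  "cauchy_transform \<mu> c p = (\<integral>x. poly p x / (x - c) \<partial>\<mu>)"

lemma gap_if_not_in_msupport:
  assumes "sets \<mu> = sets borel" "c \<notin> msupport \<mu>"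
  shows "\<exists>e>0. AE x in \<mu>. e \<le> \<bar>x - c\<bar>"
proof -
  obtain e where "e > 0" and "emeasure \<mu> {c - e<..<c + e} = 0"
    using assms(2) unfolding msupport_def by (auto simp: not_less)
  then have "{c - e<..<c + e} \<in> null_sets \<mu>"
    using assms(1) by (simp add: null_sets_def)
  then have "AE x in \<mu>. e \<le> \<bar>x - c\<bar>"
    by (rule AE_I') auto
  with \<open>e > 0\<close> show ?thesis by blast
qed

locale measure_avoiding_point =
  fixes \<mu> :: "real measure" and c :: real
  assumes sets_eq_borel: "sets \<mu> = sets borel"
    and integrable_power: "\<And>k. integrable \<mu> (\<lambda>t. t ^ k)"
    and gap: "\<exists>e>0. AE x in \<mu>. e \<le> \<bar>x - c\<bar>"
begin

lemma integrable_poly: "integrable \<mu> (\<lambda>x. poly p x)"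
  unfolding poly_altdef by (simp add: integrable_power)

lemma AE_neq_point: "AE x in \<mu>. x \<noteq> c"
  using gap by (auto elim!: eventually_mono)

lemma integrable_poly_div: "integrable \<mu> (\<lambda>x. poly p x / (x - c))"
proof -
  obtain e where e: "e > 0" "AE x in \<mu>. e \<le> \<bar>x - c\<bar>" using gap by blast
  show ?thesis
  proof (rule Bochner_Integration.integrable_bound[where f = "\<lambda>x. poly p x / e"])
    show "integrable \<mu> (\<lambda>x. poly p x / e)" using integrable_poly by simp
    have "(\<lambda>x. poly p x / (x - c)) \<in> borel_measurable borel"
      by (measurable; intro borel_measurable_continuous_onI continuous_intros)
    then show "(\<lambda>x. poly p x / (x - c)) \<in> borel_measurable \<mu>"
      using measurable_cong_sets[OF sets_eq_borel refl] by blast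
    show "AE x in \<mu>. norm (poly p x / (x - c)) \<le> norm (poly p x / e)"
      using e(2)
    proof eventually_elim
      case (elim x)
      with e(1) show ?case by (auto simp: field_simps intro!: mult_right_mono)
    qed
  qed
qed

lemma cauchy_transform_add:
  "cauchy_transform \<mu> c (p + q) = cauchy_transform \<mu> c p + cauchy_transform \<mu> c q"
  using integrable_poly_div[of p] integrable_poly_div[of q]
  by (simp add: cauchy_transform_def add_divide_distrib)

lemma cauchy_transform_smult: "cauchy_transform \<mu> c (smult a p) = a * cauchy_transform \<mu> c p"
  using integral_mult_right_zero[of \<mu> a "\<lambda>x. poly p x / (x - c)"]
  by (simp add: cauchy_transform_def)

lemma cauchy_transform_linear_factor:
  "cauchy_transform \<mu> c ([:-c, 1:] * p) = (\<integral>x. poly p x \<partial>\<mu>)"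
  unfolding cauchy_transform_def
proof (rule integral_cong_AE)
  show "(\<lambda>x. poly ([:-c, 1:] * p) x / (x - c)) \<in> borel_measurable \<mu>"
    using integrable_poly_div by blast
  show "(\<lambda>x. poly p x) \<in> borel_measurable \<mu>"
    using integrable_poly by blast
  show "AE x in \<mu>. poly ([:-c, 1:] * p) x / (x - c) = poly p x"
    using AE_neq_point by eventually_elim (simp add: left_diff_distrib[symmetric])
qed

lemma cauchy_transform_monomial_mult:
  "cauchy_transform \<mu> c ([:0, 1:] * p) = (\<integral>x. poly p x \<partial>\<mu>) + c * cauchy_transform \<mu> c p"
proof -
  have "[:0, 1:] * p = [:-c, 1:] * p + smult c p" by (simp add: algebra_simps)
  then show ?thesis
    by (simp only: cauchy_transform_add cauchy_transform_smult cauchy_transform_linear_factor)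
qed

lemma ip_mu_poly_bilinear: "poly_bilinear (ip_mu \<mu>)"
proof
  fix p q r :: "real poly" and a :: real
  show "ip_mu \<mu> (p + q) r = ip_mu \<mu> p r + ip_mu \<mu> q r"
    using integrable_poly[of "p * r"] integrable_poly[of "q * r"]
    by (simp add: ip_mu_def distrib_right)
  show "ip_mu \<mu> (smult a p) r = a * ip_mu \<mu> p r"
    by (simp add: ip_mu_def mult.assoc)
  show "ip_mu \<mu> p q = ip_mu \<mu> q p"
    by (simp add: ip_mu_def mult.commute)
qed

sublocale mu: poly_bilinear "ip_mu \<mu>"
  by (rule ip_mu_poly_bilinear)

lemma ip_geron_eq_cauchy_transform: "ip_geron \<mu> c p q = cauchy_transform \<mu> c (p * q)"
  by (simp add: ip_geron_def cauchy_transform_def)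

lemma Fm_eq_cauchy_transform: "Fm \<mu> P n c = cauchy_transform \<mu> c (P n)"
  by (simp add: Fm_def cauchy_transform_def)

lemma ip_geron_N_poly_bilinear: "poly_bilinear (ip_geron_N \<mu> c N)"
  by unfold_locales
    (simp_all add: ip_geron_N_def ip_geron_eq_cauchy_transform algebra_simps
      cauchy_transform_add cauchy_transform_smult)

lemma ip_geron_synthetic_div:
  "ip_geron \<mu> c R q = ip_mu \<mu> R (synthetic_div q c) + poly q c * cauchy_transform \<mu> c R"
proof -
  have "R * q = [:-c, 1:] * (R * synthetic_div q c) + smult (poly q c) R"
    by (subst (1) synthetic_div_correct'[of c q, symmetric]) (simp add: algebra_simps)
  then have "ip_geron \<mu> c R q
      = cauchy_transform \<mu> c ([:-c, 1:] * (R * synthetic_div q c) + smult (poly q c) R)"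
    by (simp only: ip_geron_eq_cauchy_transform)
  also have "\<dots> = (\<integral>x. poly (R * synthetic_div q c) x \<partial>\<mu>) + poly q c * cauchy_transform \<mu> c R"
    by (simp only: cauchy_transform_add cauchy_transform_smult cauchy_transform_linear_factor)
  finally show ?thesis by (simp add: ip_mu_def)
qed

lemma geronimus_connection:
  assumes P: "MOPS (ip_mu \<mu>) P" and Q: "MOPS (ip_geron_N \<mu> c N) Q" and n: "n \<ge> 1"
    and den: "Fm \<mu> P (n - 1) c + N * poly (P (n - 1)) c \<noteq> 0"
  shows "Q n = P n + smult (- (Fm \<mu> P n c + N * poly (P n) c)
                            / (Fm \<mu> P (n - 1) c + N * poly (P (n - 1)) c)) (P (n - 1))"
proof -
  interpret geron: poly_bilinear "ip_geron_N \<mu> c N" by (rule ip_geron_N_poly_bilinear)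
  define l where "l = - (Fm \<mu> P n c + N * poly (P n) c) / (Fm \<mu> P (n - 1) c + N * poly (P (n - 1)) c)"
  define R where "R = P n + smult l (P (n - 1))"
  have "degree (smult l (P (n - 1))) < degree (P n)"
    using MOPS_degree[OF P, of n] MOPS_degree[OF P, of "n - 1"] degree_smult_le[of l "P (n - 1)"] n
    by linarith
  then have deg: "degree R = n" and lead: "lead_coeff R = 1"
    using MOPS_degree[OF P] MOPS_coeff_top[OF P] by (auto simp: R_def degree_add_eq_left coeff_eq_0)
  have "ip_geron_N \<mu> c N R q = 0" if q: "degree q < n \<or> q = 0" for q
  proof -
    let ?s = "synthetic_div q c"
    have s: "degree ?s < n - 1 \<or> ?s = 0"
      using q by (cases "degree q = 0") (auto simp: degree_synthetic_div synthetic_div_eq_0_iff)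
    have "ip_mu \<mu> (P n) ?s = 0" "ip_mu \<mu> (P (n - 1)) ?s = 0"
      using s by (auto intro!: mu.MOPS_orthogonal_lower[OF P])
    then have "ip_mu \<mu> R ?s = 0"
      by (simp add: R_def mu.add_left mu.smult_left)
    moreover have "cauchy_transform \<mu> c R = Fm \<mu> P n c + l * Fm \<mu> P (n - 1) c"
      by (simp add: R_def Fm_eq_cauchy_transform cauchy_transform_add cauchy_transform_smult)
    ultimately have "ip_geron_N \<mu> c N R q
        = poly q c * (Fm \<mu> P n c + l * Fm \<mu> P (n - 1) c + N * (poly (P n) c + l * poly (P (n - 1)) c))"
      by (simp add: ip_geron_N_def ip_geron_synthetic_div R_def algebra_simps)
    also have "\<dots> = 0"
      using den by (simp add: l_def field_simps)
    finally show ?thesis .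
  qed
  then have "R = Q n" by (intro geron.MOPS_unique[OF Q deg lead])
  then show ?thesis by (simp add: R_def l_def)
qed

end

locale three_term_recurrence = measure_avoiding_point +
  fixes P :: "nat \<Rightarrow> real poly" and \<beta> \<gamma> :: "nat \<Rightarrow> real"
  assumes P_MOPS: "MOPS (ip_mu \<mu>) P"
    and recurrence_0: "[:0, 1:] * P 0 = P 1 + smult (\<beta> 0) (P 0)"
    and recurrence: "\<And>k. k \<ge> 1 \<Longrightarrow>
       [:0, 1:] * P k = P (Suc k) + smult (\<beta> k) (P k) + smult (\<gamma> k) (P (k - 1))"
begin

lemma poly_recurrence:
  "k \<ge> 1 \<Longrightarrow> poly (P (Suc k)) t = (t - \<beta> k) * poly (P k) t - \<gamma> k * poly (P (k - 1)) t"
  using arg_cong[OF recurrence, of k "\<lambda>p. poly p t"] by (simp add: algebra_simps)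

lemma norm_recurrence:
  assumes k: "k \<ge> 1"
  shows "ip_mu \<mu> (P k) (P k) = \<gamma> k * ip_mu \<mu> (P (k - 1)) (P (k - 1))"
proof -
  have lower: "degree (P (k - 1)) < k"
    using MOPS_degree[OF P_MOPS] k by simp
  \<comment> \<open>Multiplication by x is self-adjoint; x P_(k-1) equals P_k modulo lower degree.\<close>
  have "ip_mu \<mu> ([:0, 1:] * P k) (P (k - 1)) = ip_mu \<mu> (P k) ([:0, 1:] * P (k - 1))"
    by (simp add: ip_mu_def ac_simps)
  moreover have "ip_mu \<mu> ([:0, 1:] * P k) (P (k - 1)) = \<gamma> k * ip_mu \<mu> (P (k - 1)) (P (k - 1))"
    using lower mu.MOPS_orthogonal_lower[OF P_MOPS, of "P (k - 1)" "Suc k"]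
      mu.MOPS_orthogonal_lower[OF P_MOPS, of "P (k - 1)" k]
    by (simp only: recurrence[OF k] mu.add_left mu.smult_left) simp
  moreover have "ip_mu \<mu> (P k) ([:0, 1:] * P (k - 1)) = ip_mu \<mu> (P k) (P k)"
  proof -
    let ?q = "[:0, 1:] * P (k - 1)"
    have "degree ?q \<le> k" "coeff ?q k = 1"
      using MOPS_degree[OF P_MOPS] MOPS_coeff_top[OF P_MOPS] k
      by (cases k; auto simp: degree_pCons_le)+
    then have "degree (?q - P k) < k \<or> ?q - P k = 0"
      using degree_diff_smult_monic_less[of ?q k "P k"] MOPS_degree[OF P_MOPS] MOPS_lead_coeff[OF P_MOPS]
      by simp
    then have "ip_mu \<mu> (P k) (?q - P k) = 0"
      by (rule mu.MOPS_orthogonal_lower[OF P_MOPS])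
    then show ?thesis by (simp only: mu.diff_right)
  qed
  ultimately show ?thesis by simp
qed

lemma gamma_nonzero: "k \<ge> 1 \<Longrightarrow> \<gamma> k \<noteq> 0"
  using norm_recurrence MOPS_norm_nonzero[OF P_MOPS] by (metis mult_zero_left)

lemma integral_P_eq_0: "k \<ge> 1 \<Longrightarrow> (\<integral>x. poly (P k) x \<partial>\<mu>) = 0"
  using mu.MOPS_orthogonal_lower[OF P_MOPS, of 1 k] by (simp add: ip_mu_def MOPS_0[OF P_MOPS])

lemma Fm_recurrence:
  assumes "k \<ge> 1"
  shows "Fm \<mu> P (Suc k) c = (c - \<beta> k) * Fm \<mu> P k c - \<gamma> k * Fm \<mu> P (k - 1) c"
proof -
  have "cauchy_transform \<mu> c ([:0, 1:] * P k)
      = cauchy_transform \<mu> c (P (Suc k) + smult (\<beta> k) (P k) + smult (\<gamma> k) (P (k - 1)))"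
    by (simp only: recurrence[OF assms])
  then show ?thesis
    unfolding Fm_eq_cauchy_transform
    by (simp only: cauchy_transform_monomial_mult cauchy_transform_add cauchy_transform_smult
        integral_P_eq_0[OF assms]) (simp add: algebra_simps)
qed

lemma Fm_1: "Fm \<mu> P 1 c = (c - \<beta> 0) * Fm \<mu> P 0 c + ip_mu \<mu> (P 0) (P 0)"
proof -
  have "cauchy_transform \<mu> c ([:0, 1:] * P 0) = cauchy_transform \<mu> c (P 1 + smult (\<beta> 0) (P 0))"
    by (simp only: recurrence_0)
  moreover have "ip_mu \<mu> (P 0) (P 0) = (\<integral>x. poly (P 0) x \<partial>\<mu>)"
    by (simp add: ip_mu_def MOPS_0[OF P_MOPS])
  ultimately show ?thesis
    unfolding Fm_eq_cauchy_transform
    by (simp only: cauchy_transform_monomial_mult cauchy_transform_add cauchy_transform_smult)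
      (simp add: algebra_simps)
qed

lemma Fm_wronskian:
  "Fm \<mu> P (Suc m) c * poly (P m) c - Fm \<mu> P m c * poly (P (Suc m)) c = ip_mu \<mu> (P m) (P m)"
proof (induction m)
  case 0
  have P1: "poly (P 1) c = c - \<beta> 0"
    using arg_cong[OF recurrence_0, of "\<lambda>p. poly p c"] by (simp add: MOPS_0[OF P_MOPS])
  show ?case
    unfolding One_nat_def[symmetric] Fm_1 P1 by (simp add: MOPS_0[OF P_MOPS] algebra_simps)
next
  case (Suc m)
  have "Fm \<mu> P (Suc (Suc m)) c * poly (P (Suc m)) c - Fm \<mu> P (Suc m) c * poly (P (Suc (Suc m))) c
      = \<gamma> (Suc m) * (Fm \<mu> P (Suc m) c * poly (P m) c - Fm \<mu> P m c * poly (P (Suc m)) c)"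
    unfolding Fm_recurrence[of "Suc m", simplified] poly_recurrence[of "Suc m", simplified]
    by (simp add: algebra_simps)
  then show ?case using Suc.IH norm_recurrence[of "Suc m"] by simp
qed

end


lemma ip_geron_N_0: "ip_geron_N \<mu> c 0 = ip_geron \<mu> c"
  by (simp add: fun_eq_iff ip_geron_N_def)

lemma Lam_identity:
  fixes p F Pn Fn N :: real
  assumes "p \<noteq> 0" "F \<noteq> 0" "F + N * p \<noteq> 0"
  shows "(Pn / p - Fn / F) / (1 + N * (p / F)) - Pn / p = - (Fn + N * Pn) / (F + N * p)"
proof -
  \<comment> \<open>An opaque name for F + N p keeps field_simps from expanding the denominator.\<close>
  obtain D where D: "D = F + N * p" "D \<noteq> 0" using assms(3) by blast
  have "1 + N * (p / F) = D / F" using D(1) assms(2) by (simp add: field_simps)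
  then have "(Pn / p - Fn / F) / (1 + N * (p / F)) - Pn / p = - (Fn + N * Pn) / D"
    using assms(1,2) D(2) by (simp add: field_simps) (simp add: D(1) algebra_simps)
  then show ?thesis using D(1) by simp
qed

context three_term_recurrence
begin

lemma Bc_eq:
  assumes Qc: "MOPS (ip_geron \<mu> c) Qc" and n: "n \<ge> 1" and F: "Fm \<mu> P (n - 1) c \<noteq> 0"
  shows "Bc \<mu> P Qc c n = poly (P (n - 1)) c / Fm \<mu> P (n - 1) c"
proof -
  let ?h = "ip_mu \<mu> (P (n - 1)) (P (n - 1))"
  have Qc0: "MOPS (ip_geron_N \<mu> c 0) Qc" using Qc by (simp add: ip_geron_N_0)
  have "poly (Qc n) c = poly (P n) c - Fm \<mu> P n c / Fm \<mu> P (n - 1) c * poly (P (n - 1)) c"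
    using geronimus_connection[OF P_MOPS Qc0 n] F by simp
  moreover have "Fm \<mu> P n c * poly (P (n - 1)) c - Fm \<mu> P (n - 1) c * poly (P n) c = ?h"
    using Fm_wronskian[of "n - 1"] n by simp
  ultimately have "poly (Qc n) c = - ?h / Fm \<mu> P (n - 1) c"
    using F by (simp add: field_simps)
  moreover have "(\<integral>x. (poly (P (n - 1)) x)\<^sup>2 \<partial>\<mu>) = ?h"
    by (simp add: ip_mu_def power2_eq_square)
  ultimately show ?thesis
    using MOPS_norm_nonzero[OF P_MOPS] by (simp add: Bc_def)
qed

lemma Lam_eq_connection_coeff:
  assumes Qc: "MOPS (ip_geron \<mu> c) Qc" and n: "n \<ge> 1"
    and p: "poly (P (n - 1)) c \<noteq> 0" and F: "Fm \<mu> P (n - 1) c \<noteq> 0"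
    and B: "1 + N * Bc \<mu> P Qc c n \<noteq> 0"
  shows "Fm \<mu> P (n - 1) c + N * poly (P (n - 1)) c \<noteq> 0"
    and "Lam \<mu> P Qc c N n = - (Fm \<mu> P n c + N * poly (P n) c)
                              / (Fm \<mu> P (n - 1) c + N * poly (P (n - 1)) c)"
proof -
  have B': "1 + N * (poly (P (n - 1)) c / Fm \<mu> P (n - 1) c) \<noteq> 0"
    using B Bc_eq[OF Qc n F] by simp
  then show den: "Fm \<mu> P (n - 1) c + N * poly (P (n - 1)) c \<noteq> 0"
    using F by (simp add: field_simps)
  show "Lam \<mu> P Qc c N n = - (Fm \<mu> P n c + N * poly (P n) c)
                              / (Fm \<mu> P (n - 1) c + N * poly (P (n - 1)) c)"
    unfolding Lam_def pic_def rc_def Bc_eq[OF Qc n F] by (rule Lam_identity[OF p F den])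
qed

lemma QcN_eq_connection:
  assumes "MOPS (ip_geron \<mu> c) Qc" and "MOPS (ip_geron_N \<mu> c N) QcN" and "n \<ge> 1"
    and "poly (P (n - 1)) c \<noteq> 0" and "Fm \<mu> P (n - 1) c \<noteq> 0"
    and "1 + N * Bc \<mu> P Qc c n \<noteq> 0"
  shows "QcN n = P n + smult (Lam \<mu> P Qc c N n) (P (n - 1))"
  using geronimus_connection[OF P_MOPS assms(2,3)] Lam_eq_connection_coeff[OF assms(1,3-6)]
  by simp

end


lemma solve_ladder_system:
  fixes \<Delta> B2 g L0 L1 p0 p1 q0 q1 C D :: real
  assumes "\<Delta> \<noteq> 0" "g \<noteq> 0" "\<Delta> = B2 + L1 * L0 / g"
    and "q0 = p0 + L1 * p1" "q1 = B2 * p1 - L0 / g * p0"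
  shows "C * p0 + D * p1 = (C * B2 * g + D * L0) / (\<Delta> * g) * q0 + (D - C * L1) / \<Delta> * q1"
proof -
  have \<Delta>g: "\<Delta> * g = B2 * g + L1 * L0" using assms(2,3) by (simp add: field_simps)
  have "(C * B2 * g + D * L0) / (\<Delta> * g) * q0 + (D - C * L1) / \<Delta> * q1
      = ((C * B2 * g + D * L0) * q0 + (D - C * L1) * g * q1) / (\<Delta> * g)"
    using assms(1,2) by (simp add: field_simps)
  also have "(C * B2 * g + D * L0) * q0 + (D - C * L1) * g * q1 = (C * p0 + D * p1) * (\<Delta> * g)"
    unfolding \<Delta>g assms(4,5) using assms(2) by (simp add: field_simps)
  finally show ?thesis using assms(1,2) by simp
qed

locale geronimus_ladder =
  fixes \<sigma> :: "real poly" and a b :: "nat \<Rightarrow> real poly" and \<beta> \<gamma> :: "nat \<Rightarrow> real"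
    and L1 L0 :: real and n :: nat and P0 P1 P2 Q0 Q1 :: "real poly"
  assumes gamma: "\<gamma> (n - 1) \<noteq> 0" and L0: "L0 \<noteq> 0"
    and structure_0: "\<sigma> * pderiv P0 = a n * P0 + b n * P1"
    and structure_1: "\<sigma> * pderiv P1 = a (n - 1) * P1 + b (n - 1) * P2"
    and recurrence_1: "[:0, 1:] * P1 = P0 + smult (\<beta> (n - 1)) P1 + smult (\<gamma> (n - 1)) P2"
    and Q0_def: "Q0 = P0 + smult L1 P1" and Q1_def: "Q1 = P1 + smult L0 P2"
begin

lemma poly_P2:
  "poly P2 t = (t * poly P1 t - poly P0 t - \<beta> (n - 1) * poly P1 t) / \<gamma> (n - 1)"
  using arg_cong[OF recurrence_1, of "\<lambda>p. poly p t"] gamma by (simp add: field_simps)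

lemma poly_pderiv_P0:
  "poly \<sigma> t \<noteq> 0 \<Longrightarrow> poly (pderiv P0) t = (poly (a n) t * poly P0 t + poly (b n) t * poly P1 t) / poly \<sigma> t"
  using arg_cong[OF structure_0, of "\<lambda>p. poly p t"] by (simp add: field_simps)

lemma poly_pderiv_P1:
  "poly \<sigma> t \<noteq> 0 \<Longrightarrow>
   poly (pderiv P1) t = (poly (a (n - 1)) t * poly P1 t + poly (b (n - 1)) t * poly P2 t) / poly \<sigma> t"
  using arg_cong[OF structure_1, of "\<lambda>p. poly p t"] by (simp add: field_simps)

lemma poly_Q0: "poly Q0 t = poly P0 t + L1 * poly P1 t"
  by (simp add: Q0_def)

lemma poly_Q1: "poly Q1 t = B2f \<beta> \<gamma> L0 n t * poly P1 t - L0 / \<gamma> (n - 1) * poly P0 t"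
  using gamma L0 by (simp add: Q1_def poly_P2 B2f_def field_simps)

lemma poly_pderiv_Q0:
  assumes "poly \<sigma> t \<noteq> 0" "poly (b (n - 1)) t \<noteq> 0"
  shows "poly (pderiv Q0) t = C1f \<sigma> a b \<gamma> L1 n t * poly P0 t + D1f \<sigma> a b \<beta> \<gamma> L1 n t * poly P1 t"
  using assms gamma
  by (simp add: Q0_def pderiv_add pderiv_smult poly_pderiv_P0 poly_pderiv_P1 poly_P2
      C1f_def D1f_def field_simps)

lemma poly_pderiv_Q1:
  assumes "poly \<sigma> t \<noteq> 0" "poly (b (n - 1)) t \<noteq> 0"
  shows "poly (pderiv Q1) t = C2f \<sigma> a b \<beta> \<gamma> L0 n t * poly P0 t + D2f \<sigma> a b \<beta> \<gamma> L0 n t * poly P1 t"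
proof -
  \<comment> \<open>Eliminate P2 before differentiating: \<gamma> P2 = (x - \<beta>) P1 - P0.\<close>
  have "smult (\<gamma> (n - 1)) Q1 = smult (\<gamma> (n - 1)) P1 + smult L0 ([:- \<beta> (n - 1), 1:] * P1 - P0)"
    using recurrence_1 by (simp add: Q1_def smult_add_right algebra_simps)
  from arg_cong[OF this, of "\<lambda>p. poly (pderiv p) t"]
  have "poly (pderiv Q1) t = poly (pderiv P1) t
      + L0 / \<gamma> (n - 1) * (poly P1 t + (t - \<beta> (n - 1)) * poly (pderiv P1) t - poly (pderiv P0) t)"
    using gamma by (simp add: pderiv_add pderiv_smult pderiv_mult pderiv_diff pderiv_pCons field_simps)
  also have "\<dots> = C2f \<sigma> a b \<beta> \<gamma> L0 n t * poly P0 t + D2f \<sigma> a b \<beta> \<gamma> L0 n t * poly P1 t"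
    using assms gamma L0
    by (simp add: poly_pderiv_P0 poly_pderiv_P1 poly_P2 C2f_def D2f_def field_simps)
  finally show ?thesis .
qed

lemma ladder_Q0:
  assumes "poly \<sigma> t \<noteq> 0" "poly (b (n - 1)) t \<noteq> 0" "Deltaf \<beta> \<gamma> L1 L0 n t \<noteq> 0"
  shows "poly (pderiv Q0) t = xi1 \<sigma> a b \<beta> \<gamma> L1 L0 n t * poly Q0 t + eta1 \<sigma> a b \<beta> \<gamma> L1 L0 n t * poly Q1 t"
  unfolding poly_pderiv_Q0[OF assms(1,2)] xi1_def eta1_def
  by (rule solve_ladder_system[OF assms(3) gamma Deltaf_def poly_Q0 poly_Q1])

lemma ladder_Q1:
  assumes "poly \<sigma> t \<noteq> 0" "poly (b (n - 1)) t \<noteq> 0" "Deltaf \<beta> \<gamma> L1 L0 n t \<noteq> 0"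
  shows "poly (pderiv Q1) t = xi2 \<sigma> a b \<beta> \<gamma> L1 L0 n t * poly Q0 t + eta2 \<sigma> a b \<beta> \<gamma> L1 L0 n t * poly Q1 t"
  unfolding poly_pderiv_Q1[OF assms(1,2)] xi2_def eta2_def
  by (rule solve_ladder_system[OF assms(3) gamma Deltaf_def poly_Q0 poly_Q1])

end


lemma xi1_differentiable:
  assumes "poly \<sigma> t \<noteq> 0" "poly (b (n - 1)) t \<noteq> 0" "Deltaf \<beta> \<gamma> L1 L0 n t \<noteq> 0"
    and "\<gamma> (n - 1) \<noteq> 0" "L0 \<noteq> 0"
  shows "xi1 \<sigma> a b \<beta> \<gamma> L1 L0 n differentiable at t"
  using assms unfolding real_differentiable_def xi1_def C1f_def D1f_def Deltaf_def B2f_def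
  by (intro exI) (rule derivative_eq_intros refl | simp)+

lemma eta1_differentiable:
  assumes "poly \<sigma> t \<noteq> 0" "poly (b (n - 1)) t \<noteq> 0" "Deltaf \<beta> \<gamma> L1 L0 n t \<noteq> 0"
    and "\<gamma> (n - 1) \<noteq> 0" "L0 \<noteq> 0"
  shows "eta1 \<sigma> a b \<beta> \<gamma> L1 L0 n differentiable at t"
  using assms unfolding real_differentiable_def eta1_def C1f_def D1f_def Deltaf_def B2f_def
  by (intro exI) (rule derivative_eq_intros refl | simp)+

lemma second_order_ode_from_ladder:
  fixes p q :: "real poly" and \<xi>1 \<eta>1 :: "real \<Rightarrow> real" and \<xi>2 \<eta>2 :: real
  assumes U: "open U" "x \<in> U"
    and ladder_1: "\<And>t. t \<in> U \<Longrightarrow> poly (pderiv p) t = \<xi>1 t * poly p t + \<eta>1 t * poly q t"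
    and ladder_2: "poly (pderiv q) x = \<xi>2 * poly p x + \<eta>2 * poly q x"
    and diff: "\<xi>1 differentiable at x" "\<eta>1 differentiable at x" and \<eta>1: "\<eta>1 x \<noteq> 0"
  shows "poly (pderiv (pderiv p)) x + (- (\<xi>1 x + \<eta>2 + deriv \<eta>1 x / \<eta>1 x)) * poly (pderiv p) x
       + (\<xi>1 x * \<eta>2 - \<eta>1 x * \<xi>2 + (\<xi>1 x * deriv \<eta>1 x - deriv \<xi>1 x * \<eta>1 x) / \<eta>1 x) * poly p x = 0"
proof -
  let ?D = "deriv \<xi>1 x * poly p x + \<xi>1 x * poly (pderiv p) x
          + (deriv \<eta>1 x * poly q x + \<eta>1 x * poly (pderiv q) x)"
  have "((\<lambda>t. \<xi>1 t * poly p t + \<eta>1 t * poly q t) has_real_derivative ?D) (at x)"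
    using diff unfolding DERIV_deriv_iff_real_differentiable[symmetric]
    by (auto intro!: derivative_eq_intros)
  then have "(poly (pderiv p) has_real_derivative ?D) (at x)"
    by (rule has_field_derivative_transform_within_open[OF _ U]) (simp add: ladder_1)
  then have "poly (pderiv (pderiv p)) x = ?D"
    using DERIV_unique poly_DERIV by blast
  then show ?thesis
    using ladder_1[OF U(2)] ladder_2 \<eta>1 by (simp add: field_simps)
qed

theorem theorem5:
  fixes \<mu> :: "real measure" and c N :: real
    and P Qc QcN :: "nat \<Rightarrow> real poly"
    and \<beta> \<gamma> :: "nat \<Rightarrow> real"
    and \<sigma> :: "real poly" and a b :: "nat \<Rightarrow> real poly"
    and n :: nat and x :: real
  assumes borel: "sets \<mu> = sets borel"
    and ac: "absolutely_continuous lborel \<mu>"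
    and moments: "\<And>k. integrable \<mu> (\<lambda>t. t ^ k)"
    and supp_inf: "infinite (msupport \<mu>)"
    and c_notin: "c \<notin> msupport \<mu>"
    and N_pos: "N > 0"
    and P_mops: "MOPS (ip_mu \<mu>) P"
    and rec0: "[:0, 1:] * P 0 = P 1 + smult (\<beta> 0) (P 0)"
    and rec: "\<And>k. k \<ge> 1 \<Longrightarrow>
       [:0, 1:] * P k = P (Suc k) + smult (\<beta> k) (P k) + smult (\<gamma> k) (P (k - 1))"
    and struct: "\<And>k. k \<ge> 1 \<Longrightarrow> \<sigma> * pderiv (P k) = a k * P k + b k * P (k - 1)"
    and deg_ab: "\<exists>da db. \<forall>k\<ge>1. degree (a k) = da \<and> degree (b k) = db"
    and Qc_mops: "MOPS (ip_geron \<mu> c) Qc"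
    and QcN_mops: "MOPS (ip_geron_N \<mu> c N) QcN"
    and n2: "n \<ge> 2"
    and defP: "poly (P (n - 1)) c \<noteq> 0" "poly (P (n - 2)) c \<noteq> 0"
    and defF: "Fm \<mu> P (n - 1) c \<noteq> 0" "Fm \<mu> P (n - 2) c \<noteq> 0"
    and defB: "1 + N * Bc \<mu> P Qc c n \<noteq> 0" "1 + N * Bc \<mu> P Qc c (n - 1) \<noteq> 0"
    and defL0: "Lam \<mu> P Qc c N (n - 1) \<noteq> 0"
    and def_sigma: "poly \<sigma> x \<noteq> 0"
    and def_b: "poly (b (n - 1)) x \<noteq> 0"
    and def_Delta: "Deltaf \<beta> \<gamma> (Lam \<mu> P Qc c N n) (Lam \<mu> P Qc c N (n - 1)) n x \<noteq> 0"
    and def_eta1: "eta1 \<sigma> a b \<beta> \<gamma> (Lam \<mu> P Qc c N n) (Lam \<mu> P Qc c N (n - 1)) n x \<noteq> 0"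
  shows "poly (pderiv (pderiv (QcN n))) x
       + Rf \<sigma> a b \<beta> \<gamma> (Lam \<mu> P Qc c N n) (Lam \<mu> P Qc c N (n - 1)) n x * poly (pderiv (QcN n)) x
       + Sf \<sigma> a b \<beta> \<gamma> (Lam \<mu> P Qc c N n) (Lam \<mu> P Qc c N (n - 1)) n x * poly (QcN n) x = 0"
proof -
  interpret three_term_recurrence \<mu> c P \<beta> \<gamma>
    using gap_if_not_in_msupport[OF borel c_notin] by unfold_locales (use assms in auto)
  define L1 L0 where "L1 = Lam \<mu> P Qc c N n" and "L0 = Lam \<mu> P Qc c N (n - 1)"
  have n1: "n \<ge> 1" "n - 1 \<ge> 1" and shift: "n - 1 - 1 = n - 2" "Suc (n - 1) = n"
    using n2 by auto
  interpret geronimus_ladder \<sigma> a b \<beta> \<gamma> L1 L0 n "P n" "P (n - 1)" "P (n - 2)" "QcN n" "QcN (n - 1)"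
  proof
    show "QcN n = P n + smult L1 (P (n - 1))"
      unfolding L1_def by (rule QcN_eq_connection[OF Qc_mops QcN_mops n1(1) defP(1) defF(1) defB(1)])
    show "QcN (n - 1) = P (n - 1) + smult L0 (P (n - 2))"
      using QcN_eq_connection[OF Qc_mops QcN_mops n1(2)] defP(2) defF(2) defB(2)
      unfolding L0_def shift by simp
  qed (use gamma_nonzero[OF n1(2)] defL0 struct[OF n1(1)] struct[OF n1(2), unfolded shift]
         rec[OF n1(2), unfolded shift] in \<open>simp_all add: L0_def\<close>)
  define U where "U = {t. poly \<sigma> t \<noteq> 0 \<and> poly (b (n - 1)) t \<noteq> 0 \<and> Deltaf \<beta> \<gamma> L1 L0 n t \<noteq> 0}"
  have "open U"
    unfolding U_def Deltaf_def B2f_def by (intro open_Collect_conj open_Collect_neq continuous_intros)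
      (use gamma in auto)
  moreover have "x \<in> U" using def_sigma def_b def_Delta by (simp add: U_def L1_def L0_def)
  ultimately show ?thesis
    using def_eta1 unfolding Rf_def Sf_def L1_def[symmetric] L0_def[symmetric]
    by (intro second_order_ode_from_ladder[where U = U and q = "QcN (n - 1)"] ladder_Q0 ladder_Q1
        xi1_differentiable eta1_differentiable gamma L0) (auto simp: U_def)
qed

end
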